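(* Let $I\subseteq\mathbb K[x,y]$ be a good ideal. Then $I^k$ is a good ideal for every integer $k\ge1$.
   Context: Let $\mathbb K$ be a field, $R=\mathbb K[x_1,\dots,x_n]$ (here $n=2$), $\mathfrak m=\langle x_1,\dots,x_n\rangle$, $\mathbb N=\{0,1,2,\dots\}$. A monomial $x_1^{\alpha_1}\cdots x_n^{\alpha_n}$ is identified with the point $(\alpha_1,\dots,\alpha_n)\in\mathbb N^n$. For a monomial ideal $I$, $G(I)$ denotes its (unique) minimal monomial generating set. If $I$ is an $\mathfrak m$-primary monomial ideal, then for each $i$ there is a unique $d_i\ge1$ with $x_i^{d_i}\in G(I)$; write $\mu_i=x_i^{d_i}$. For $(a_1,\dots,a_n)\in\mathbb N^n$ the box associated to $I$ is $B_{a_1,\dots,a_n}=([a_1d_1,(a_1+1)d_1]\times\cdots\times[a_nd_n,(a_n+1)d_n])\cap\mathbb N^n$; a monomial belongs to a box if its exponent vector does. An $\mathfrak m$-primary monomial ideal $I$ is called good if for every integer $l\ge1$, every element of $G(I^l)$ belongs to some box $B_{a_1,\dots,a_n}$ with $a_1+\dots+a_n=l-1$; otherwise bad. (Goodness of $I^k$ is defined with respect to its own pure powers $x_i^{kd_i}\in G(I^k)$.) *)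

theory Defs
  imports Main
begin

(* A monomial x^a y^b of K[x,y] is identified with its exponent vector (a,b) in N^2.
   A monomial ideal I of K[x,y] is determined by (and identified with) the set of
   exponent vectors of the monomials it contains; this set is closed under adding
   arbitrary exponent vectors (multiplication by monomials).  The field K plays
   no role in any of the notions below. *)

definition monomial_ideal :: "(nat \<times> nat) set \<Rightarrow> bool" where
  "monomial_ideal I \<longleftrightarrow>
     (\<forall>a b c d. (a, b) \<in> I \<longrightarrow> (a + c, b + d) \<in> I)"

definition m_primary_monomial_ideal :: "(nat \<times> nat) set \<Rightarrow> bool" where
  "m_primary_monomial_ideal I \<longleftrightarrow> monomial_ideal I \<and> (0, 0) \<notin> I \<and>
     (\<exists>d. (d, 0) \<in> I) \<and> (\<exists>e. (0, e) \<in> I)"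

(* minimal monomial generating set G(I): the minimal elements w.r.t. divisibility *)
definition gens :: "(nat \<times> nat) set \<Rightarrow> (nat \<times> nat) set" where
  "gens I = {(a, b) \<in> I. \<forall>c d. (c, d) \<in> I \<longrightarrow> c \<le> a \<longrightarrow> d \<le> b \<longrightarrow> (c, d) = (a, b)}"

fun mpow :: "(nat \<times> nat) set \<Rightarrow> nat \<Rightarrow> (nat \<times> nat) set" where
  "mpow I 0 = UNIV"
| "mpow I (Suc l) = {(c, d). \<exists>a b a' b'. (a, b) \<in> mpow I l \<and> (a', b') \<in> I \<and>
                         a + a' \<le> c \<and> b + b' \<le> d}"

definition d1 :: "(nat \<times> nat) set \<Rightarrow> nat" where
  "d1 I = (LEAST d. (d, 0) \<in> I)"

definition d2 :: "(nat \<times> nat) set \<Rightarrow> nat" where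
  "d2 I = (LEAST e. (0, e) \<in> I)"

definition box :: "(nat \<times> nat) set \<Rightarrow> nat \<Rightarrow> nat \<Rightarrow> (nat \<times> nat) set" where
  "box I a1 a2 = {(p, q). a1 * d1 I \<le> p \<and> p \<le> (a1 + 1) * d1 I \<and>
                         a2 * d2 I \<le> q \<and> q \<le> (a2 + 1) * d2 I}"

definition good :: "(nat \<times> nat) set \<Rightarrow> bool" where
  "good I \<longleftrightarrow> (\<forall>l::nat. l \<ge> 1 \<longrightarrow>
      (\<forall>g \<in> gens (mpow I l). \<exists>a1 a2. a1 + a2 = l - 1 \<and> g \<in> box I a1 a2))"

end

theory Submission
  imports Defs
begin

text \<open>Since (I^k)^l = I^(kl) and the pure powers of I^k are x^(k d1) and y^(k d2),
  the box B(a1,a2) of I lies in the box B(a1 div k, a2 div k) of I^k. A generator of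
  (I^k)^l lies in a box B(a1,a2) of I with a1 + a2 = kl - 1, and writing a1, a2 with
  remainders below k shows that (a1 div k) + (a2 div k) = l - 1.\<close>

definition mprod :: "(nat \<times> nat) set \<Rightarrow> (nat \<times> nat) set \<Rightarrow> (nat \<times> nat) set" where
  "mprod P Q = {(c, d). \<exists>a b a' b'. (a, b) \<in> P \<and> (a', b') \<in> Q \<and> a + a' \<le> c \<and> b + b' \<le> d}"

lemma mpow_Suc_mprod: "mpow I (Suc l) = mprod (mpow I l) I"
  by (simp add: mprod_def)

lemma mprod_assoc: "mprod (mprod P Q) R = mprod P (mprod Q R)"
  unfolding mprod_def by (auto; force)

lemma monomial_ideal_iff_upward_closed:
  "monomial_ideal P \<longleftrightarrow> (\<forall>a b c d. (a, b) \<in> P \<longrightarrow> a \<le> c \<longrightarrow> b \<le> d \<longrightarrow> (c, d) \<in> P)"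
  unfolding monomial_ideal_def by (metis le_add1 le_add_diff_inverse)

lemma mprod_UNIV_right:
  assumes "monomial_ideal P"
  shows "mprod P UNIV = P"
  using assms unfolding monomial_ideal_iff_upward_closed mprod_def
  by (fastforce intro: exI[of _ 0])

lemma monomial_ideal_mpow: "monomial_ideal (mpow I l)"
  unfolding monomial_ideal_iff_upward_closed
  by (cases l) (fastforce intro: le_trans)+

lemma mpow_add: "mpow I (m + n) = mprod (mpow I m) (mpow I n)"
proof (induction n)
  case 0
  show ?case by (simp add: mprod_UNIV_right[OF monomial_ideal_mpow])
next
  case (Suc n)
  then show ?case by (simp only: add_Suc_right mpow_Suc_mprod mprod_assoc)
qed

lemma mpow_mpow: "mpow (mpow I k) l = mpow I (k * l)"
proof (induction l)
  case 0
  show ?case by simp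
next
  case (Suc l)
  have "mpow I (k * Suc l) = mprod (mpow I (k * l)) (mpow I k)"
    using mpow_add[of I "k * l" k] by (simp add: add.commute)
  with Suc show ?case by (simp only: mpow_Suc_mprod)
qed

lemma d1_le: "(d, 0) \<in> I \<Longrightarrow> d1 I \<le> d"
  unfolding d1_def by (rule Least_le)

lemma d2_le: "(0, d) \<in> I \<Longrightarrow> d2 I \<le> d"
  unfolding d2_def by (rule Least_le)

lemma d1_mem: "(d, 0) \<in> I \<Longrightarrow> (d1 I, 0) \<in> I"
  unfolding d1_def by (rule LeastI)

lemma d2_mem: "(0, d) \<in> I \<Longrightarrow> (0, d2 I) \<in> I"
  unfolding d2_def by (rule LeastI)

lemma mpow_x_axis_ge: "(d, 0) \<in> mpow I n \<Longrightarrow> n * d1 I \<le> d"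
proof (induction n arbitrary: d)
  case 0
  show ?case by simp
next
  case (Suc n)
  then obtain a a' where "(a, 0) \<in> mpow I n" "(a', 0) \<in> I" "a + a' \<le> d"
    by auto
  with Suc.IH d1_le[of a' I] show ?case by fastforce
qed

lemma mpow_y_axis_ge: "(0, d) \<in> mpow I n \<Longrightarrow> n * d2 I \<le> d"
proof (induction n arbitrary: d)
  case 0
  show ?case by simp
next
  case (Suc n)
  then obtain b b' where "(0, b) \<in> mpow I n" "(0, b') \<in> I" "b + b' \<le> d"
    by auto
  with Suc.IH d2_le[of b' I] show ?case by fastforce
qed

lemma d1_mpow:
  assumes "(d, 0) \<in> I"
  shows "d1 (mpow I n) = n * d1 I"
proof -
  have "(n * d1 I, 0) \<in> mpow I n"
    by (induction n) (use d1_mem[OF assms] in fastforce)+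
  then show ?thesis
    unfolding d1_def[of "mpow I n"]
    by (intro Least_equality) (auto intro: mpow_x_axis_ge)
qed

lemma d2_mpow:
  assumes "(0, d) \<in> I"
  shows "d2 (mpow I n) = n * d2 I"
proof -
  have "(0, n * d2 I) \<in> mpow I n"
    by (induction n) (use d2_mem[OF assms] in fastforce)+
  then show ?thesis
    unfolding d2_def[of "mpow I n"]
    by (intro Least_equality) (auto intro: mpow_y_axis_ge)
qed

lemma interval_subset_div_interval:
  fixes a k d p :: nat
  assumes "k > 0" "a * d \<le> p" "p \<le> (a + 1) * d"
  shows "a div k * (k * d) \<le> p \<and> p \<le> (a div k + 1) * (k * d)"
proof -
  obtain q r where decomp: "a = k * q + r" "r < k" "q = a div k"
    using assms(1) div_mult_mod_eq[of a k] mod_less_divisor[of k a] by (metis mult.commute)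
  then have lower: "k * (a div k) \<le> a" and upper: "a + 1 \<le> k * (a div k + 1)"
    by (simp_all add: distrib_left)
  have "a div k * (k * d) \<le> a * d"
    using mult_le_mono1[OF lower, of d] by (simp only: ac_simps)
  moreover have "(a + 1) * d \<le> (a div k + 1) * (k * d)"
    using mult_le_mono1[OF upper, of d] by (simp only: ac_simps)
  ultimately show ?thesis using assms(2,3) by linarith
qed

lemma box_subset_box_mpow:
  assumes "m_primary_monomial_ideal I" "k > 0"
  shows "box I a1 a2 \<subseteq> box (mpow I k) (a1 div k) (a2 div k)"
proof -
  obtain d e where "(d, 0) \<in> I" "(0, e) \<in> I"
    using assms(1) unfolding m_primary_monomial_ideal_def by blast
  then show ?thesis
    using interval_subset_div_interval[OF assms(2)]
    by (auto simp: box_def d1_mpow d2_mpow)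
qed

lemma div_add_div_eq_of_add_eq_mult:
  fixes a1 a2 k l :: nat
  assumes "k > 0" "l > 0" "a1 + a2 = k * l - 1"
  shows "a1 div k + a2 div k = l - 1"
proof -
  have sum: "k * (a1 div k + a2 div k) + (a1 mod k + a2 mod k) + 1 = k * l"
    using assms div_mult_mod_eq[of a1 k] div_mult_mod_eq[of a2 k]
    by (simp add: algebra_simps)
  have "a1 mod k + a2 mod k + 1 < 2 * k"
    using mod_less_divisor[OF assms(1), of a1] mod_less_divisor[OF assms(1), of a2] by linarith
  then have "k * l < k * (a1 div k + a2 div k + 2)"
    using sum unfolding distrib_left by linarith
  moreover have "k * (a1 div k + a2 div k) < k * l"
    using sum by linarith
  ultimately have "a1 div k + a2 div k < l" "l < a1 div k + a2 div k + 2"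
    using mult_less_cancel1 by blast+
  then show ?thesis by linarith
qed

theorem mainTheorem13:
  fixes I :: "(nat \<times> nat) set" and k :: nat
  assumes "m_primary_monomial_ideal I"
    and "good I"
    and "k \<ge> 1"
  shows "good (mpow I k)"
  unfolding good_def
proof (intro allI impI ballI)
  fix l :: nat and g
  assume l: "l \<ge> 1" and g: "g \<in> gens (mpow (mpow I k) l)"
  have "g \<in> gens (mpow I (k * l))" "k * l \<ge> 1"
    using g l assms(3) by (simp_all add: mpow_mpow)
  then obtain a1 a2 where a: "a1 + a2 = k * l - 1" "g \<in> box I a1 a2"
    using assms(2) unfolding good_def by blast
  have "k > 0" "l > 0" using assms(3) l by simp_all
  then have "a1 div k + a2 div k = l - 1"
    using div_add_div_eq_of_add_eq_mult a(1) by blast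
  moreover have "g \<in> box (mpow I k) (a1 div k) (a2 div k)"
    using box_subset_box_mpow[OF assms(1) \<open>k > 0\<close>] a(2) by blast
  ultimately show "\<exists>a1 a2. a1 + a2 = l - 1 \<and> g \<in> box (mpow I k) a1 a2" by blast
qed

end
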